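(* Let $(X,\mu)$ and $(Z,\nu)$ be standard Borel probability spaces, and let $z\mapsto\mu_z$ be a measurable family of uniformly bounded finite Borel measures on $X$ such that $\mu=\int_Z\mu_z\,\nu(dz)$ and $\mu_z\ll_{M,\varepsilon}\mu$ for every $z\in Z$. Suppose that for each $z\in Z$, $Y_z\subseteq X$ is a Borel set with $\mu_z(Y_z)=1$. Then for every $\alpha<1-\varepsilon$ there is a finite set $S\subseteq Z$ with \[|S|\le\frac{M}{1-\alpha-\varepsilon}\quad\text{and}\quad \mu\Big(\bigcup_{z\in S}Y_z\Big)>\alpha.\]
   Context: For finite measures $\mu,\nu$ on a measurable space and $M\in(0,\infty)$, $\varepsilon\in[0,\infty)$, write $\mu\ll_{M,\varepsilon}\nu$ if $\mu(A)\le M\nu(A)+\varepsilon$ for every measurable $A$. The measures $\mu_z$ need not be probability measures. *)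

theory Defs
  imports "HOL-Probability.Probability"
begin

definition abs_cont_within :: "'a measure \<Rightarrow> real \<Rightarrow> real \<Rightarrow> 'a measure \<Rightarrow> bool" where
  "abs_cont_within mu M eps nu \<longleftrightarrow>
     (\<forall>A \<in> sets mu. measure mu A \<le> M * measure nu A + eps)"

definition measurable_family :: "'b measure \<Rightarrow> ('b \<Rightarrow> 'a::topological_space measure) \<Rightarrow> bool" where
  "measurable_family nu K \<longleftrightarrow>
     (\<forall>z \<in> space nu. sets (K z) = sets borel \<and> finite_measure (K z)) \<and>
     (\<forall>A \<in> sets borel. (\<lambda>z. emeasure (K z) A) \<in> borel_measurable nu)"

end

theory Submission
  imports Defs
begin

(* Greedy covering argument.  Write d = (1 - alpha - eps) / M.  Given a Borel set U with
   mu(U) <= alpha, the disintegration mu = \<integral> K z d nu(z) forces some fibre K z with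
   K z (U) <= mu(U) (a nonnegative integrand cannot exceed its average everywhere).  For this z,
   1 = K z (Y z) <= K z (Y z - U) + K z (U) <= M mu(Y z - U) + eps + alpha, so adding Y z to U
   increases the mu-measure by at least d.  Starting from the empty set and adding sets Y z
   greedily, after n = floor(1/d) <= M / (1 - alpha - eps) steps the measure exceeds
   n d > 1 - d >= alpha (the bound d <= 1 - alpha follows from M >= 1 - eps, which is the
   gain estimate applied to U = {}). *)

lemma exists_fibre_below_average:
  fixes K :: "'b \<Rightarrow> 'a measure"
  assumes nu: "prob_space nu"
    and meas: "(\<lambda>z. emeasure (K z) U) \<in> borel_measurable nu"
    and avg: "emeasure mu U = (\<integral>\<^sup>+ z. emeasure (K z) U \<partial>nu)"
    and fin: "emeasure mu U \<noteq> \<infinity>"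
  shows "\<exists>z \<in> space nu. emeasure (K z) U \<le> emeasure mu U"
proof (rule ccontr)
  interpret N: prob_space nu by (rule nu)
  assume "\<not> ?thesis"
  hence above: "\<And>z. z \<in> space nu \<Longrightarrow> emeasure mu U < emeasure (K z) U" by (auto simp: not_le)
  have "(\<integral>\<^sup>+ z. emeasure mu U \<partial>nu) < (\<integral>\<^sup>+ z. emeasure (K z) U \<partial>nu)"
  proof (rule nn_integral_less)
    show "AE z in nu. emeasure mu U \<le> emeasure (K z) U"
      using above by (auto intro!: AE_I2 less_imp_le)
    show "\<not> (AE z in nu. emeasure (K z) U \<le> emeasure mu U)"
    proof
      assume "AE z in nu. emeasure (K z) U \<le> emeasure mu U"
      hence "AE z in nu. False"
        by (rule AE_mp) (auto intro!: AE_I2 dest: above simp: not_le[symmetric])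
      thus False using N.AE_False by simp
    qed
  qed (use meas fin N.emeasure_space_1 in simp_all)
  thus False using avg N.emeasure_space_1 by simp
qed

lemma abs_cont_within_gain:
  assumes ac: "abs_cont_within k M eps mu" and fin: "finite_measure k"
    and sets_eq: "sets k = sets mu" and Y: "Y \<in> sets mu" and U: "U \<in> sets mu"
  shows "measure k Y - measure k U - eps \<le> M * measure mu (Y - U)"
proof -
  interpret k: finite_measure k by (rule fin)
  have "measure k Y \<le> measure k ((Y - U) \<union> U)"
    using Y U sets_eq by (intro k.finite_measure_mono) auto
  also have "\<dots> \<le> measure k (Y - U) + measure k U"
    using Y U sets_eq by (intro measure_Un_le) auto
  also have "measure k (Y - U) \<le> M * measure mu (Y - U) + eps"
    using ac Y U sets_eq unfolding abs_cont_within_def by auto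
  finally show ?thesis by simp
qed

lemma greedy_cover:
  fixes mu :: "'a measure" and Y :: "'b \<Rightarrow> 'a set" and n :: nat
  assumes Y: "\<And>z. Y z \<in> sets mu"
    and step: "\<And>U. U \<in> sets mu \<Longrightarrow> measure mu U \<le> alpha \<Longrightarrow>
                    \<exists>z. measure mu U + d \<le> measure mu (U \<union> Y z)"
    and enough: "alpha < real n * d"
  shows "\<exists>S. finite S \<and> card S \<le> n \<and> alpha < measure mu (\<Union>z\<in>S. Y z)"
proof -
  have "\<exists>S. finite S \<and> card S \<le> m \<and>
          (alpha < measure mu (\<Union>z\<in>S. Y z) \<or> real m * d \<le> measure mu (\<Union>z\<in>S. Y z))" for m
  proof (induction m)
    case 0
    show ?case by (intro exI[of _ "{}"]) auto
  next
    case (Suc m)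
    then obtain S where S: "finite S" "card S \<le> m"
      and progress: "alpha < measure mu (\<Union>z\<in>S. Y z) \<or> real m * d \<le> measure mu (\<Union>z\<in>S. Y z)"
      by blast
    show ?case
    proof (cases "alpha < measure mu (\<Union>z\<in>S. Y z)")
      case True
      with S show ?thesis by (intro exI[of _ S]) auto
    next
      case False
      have "(\<Union>z\<in>S. Y z) \<in> sets mu" using S(1) Y by (intro sets.finite_UN) auto
      with False obtain z where
        "measure mu (\<Union>z\<in>S. Y z) + d \<le> measure mu ((\<Union>z\<in>S. Y z) \<union> Y z)"
        using step by force
      moreover have "(\<Union>x\<in>insert z S. Y x) = (\<Union>z\<in>S. Y z) \<union> Y z" by auto
      moreover have "card (insert z S) \<le> Suc m" using S by (simp add: card_insert_if)
      moreover have "real (Suc m) * d \<le> measure mu ((\<Union>z\<in>S. Y z) \<union> Y z)"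
        using calculation(1) progress False by (simp add: algebra_simps)
      ultimately show ?thesis using S by (intro exI[of _ "insert z S"]) auto
    qed
  qed
  then obtain S where S: "finite S" "card S \<le> n"
    and progress: "alpha < measure mu (\<Union>z\<in>S. Y z) \<or> real n * d \<le> measure mu (\<Union>z\<in>S. Y z)"
    by blast
  from progress enough have "alpha < measure mu (\<Union>z\<in>S. Y z)" by linarith
  with S show ?thesis by (intro exI[of _ S] conjI)
qed

lemma enough_greedy_steps:
  fixes d alpha :: real
  assumes d_pos: "0 < d" and d_le: "d \<le> 1 - alpha"
  shows "\<exists>n::nat. real n \<le> 1 / d \<and> alpha < real n * d"
proof (intro exI conjI)
  show "real (nat \<lfloor>1 / d\<rfloor>) \<le> 1 / d" using d_pos by simp
  have "1 / d - 1 < real (nat \<lfloor>1 / d\<rfloor>)" using d_pos by simp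
  hence "(1 / d - 1) * d < real (nat \<lfloor>1 / d\<rfloor>) * d" using d_pos by (rule mult_strict_right_mono)
  thus "alpha < real (nat \<lfloor>1 / d\<rfloor>) * d" using d_pos d_le by (simp add: algebra_simps)
qed

lemma disintegration_gain:
  fixes mu :: "'a::topological_space measure" and K :: "'b \<Rightarrow> 'a measure"
  assumes mu_prob: "prob_space mu" and mu_sets: "sets mu = sets borel"
    and nu_prob: "prob_space nu" and K_meas: "measurable_family nu K"
    and disint: "\<forall>A \<in> sets borel. emeasure mu A = (\<integral>\<^sup>+ z. emeasure (K z) A \<partial>nu)"
    and K_ac: "\<forall>z. abs_cont_within (K z) M eps mu" and M_pos: "M > 0"
    and Y_borel: "\<forall>z. Y z \<in> sets borel" and Y_full: "\<forall>z. measure (K z) (Y z) = 1"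
    and U: "U \<in> sets borel" and small: "measure mu U \<le> a"
  shows "\<exists>z. measure mu U + (1 - a - eps) / M \<le> measure mu (U \<union> Y z)"
proof -
  interpret P: prob_space mu by (rule mu_prob)
  have K_fin: "z \<in> space nu \<Longrightarrow> finite_measure (K z)"
    and K_sets: "z \<in> space nu \<Longrightarrow> sets (K z) = sets borel" for z
    using K_meas unfolding measurable_family_def by auto
  have meas: "(\<lambda>z. emeasure (K z) U) \<in> borel_measurable nu"
    using K_meas U unfolding measurable_family_def by blast
  have avg: "emeasure mu U = (\<integral>\<^sup>+ z. emeasure (K z) U \<partial>nu)" using disint U by blast
  obtain z where z: "z \<in> space nu" and below: "emeasure (K z) U \<le> emeasure mu U"
    using exists_fibre_below_average[OF nu_prob meas avg] by (auto simp: P.emeasure_eq_measure)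
  have "measure (K z) U \<le> measure mu U"
    using below by (simp add: finite_measure.emeasure_eq_measure[OF K_fin[OF z]]
                              P.emeasure_eq_measure)
  moreover have "measure (K z) (Y z) - measure (K z) U - eps \<le> M * measure mu (Y z - U)"
    by (rule abs_cont_within_gain)
      (use K_ac K_fin[OF z] K_sets[OF z] mu_sets Y_borel U in auto)
  ultimately have "1 - a - eps \<le> M * measure mu (Y z - U)" using Y_full small by force
  hence "(1 - a - eps) / M \<le> measure mu (Y z - U)"
    using M_pos by (simp add: divide_le_eq mult.commute)
  moreover have "measure mu (U \<union> Y z) = measure mu U + measure mu (Y z - U)"
    using P.finite_measure_Union[of U "Y z - U"] U Y_borel mu_sets by (simp add: Un_Diff_cancel)
  ultimately show ?thesis by (intro exI[of _ z]) linarith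
qed

theorem mainTheorem9:
  fixes mu :: "'a::polish_space measure"
    and nu :: "'b::polish_space measure"
    and K :: "'b \<Rightarrow> 'a measure"
    and Y :: "'b \<Rightarrow> 'a set"
    and M eps alpha :: real
  assumes mu_prob: "prob_space mu" and mu_sets: "sets mu = sets borel"
    and nu_prob: "prob_space nu" and nu_sets: "sets nu = sets borel"
    and M_pos: "M > 0" and eps_nonneg: "eps \<ge> 0"
    and K_meas: "measurable_family nu K"
    and K_bdd: "\<exists>C::real. \<forall>z. emeasure (K z) UNIV \<le> ennreal C"
    and disint: "\<forall>A \<in> sets borel. emeasure mu A = (\<integral>\<^sup>+ z. emeasure (K z) A \<partial>nu)"
    and K_ac: "\<forall>z. abs_cont_within (K z) M eps mu"
    and Y_borel: "\<forall>z. Y z \<in> sets borel"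
    and Y_full: "\<forall>z. measure (K z) (Y z) = 1"
    and alpha: "alpha < 1 - eps"
  shows "\<exists>S. finite S \<and> real (card S) \<le> M / (1 - alpha - eps) \<and>
             measure mu (\<Union>z\<in>S. Y z) > alpha"
proof (cases "alpha < 0")
  case True
  then show ?thesis using M_pos alpha by (intro exI[of _ "{}"]) auto
next
  case False
  define d where "d = (1 - alpha - eps) / M"
  have d_pos: "d > 0" using alpha M_pos by (simp add: d_def)
  note gain = disintegration_gain[OF mu_prob mu_sets nu_prob K_meas disint K_ac M_pos Y_borel Y_full]
  have step: "\<exists>z. measure mu U + d \<le> measure mu (U \<union> Y z)"
    if "U \<in> sets mu" "measure mu U \<le> alpha" for U
    using gain[of U alpha] that mu_sets unfolding d_def by simp
  \<comment> \<open>Applied to the empty set, the gain estimate shows \<open>1 - eps \<le> M\<close>, hence \<open>d \<le> 1 - alpha\<close>.\<close>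
  obtain z where "(1 - 0 - eps) / M \<le> measure mu ({} \<union> Y z)" using gain[of "{}" 0] by auto
  hence "1 - eps \<le> M * measure mu (Y z)" using M_pos by (simp add: divide_le_eq mult.commute)
  also have "\<dots> \<le> M" using M_pos prob_space.prob_le_1[OF mu_prob] by (simp add: mult_left_le)
  finally have "(1 - eps) * (1 - alpha) \<le> M * (1 - alpha)"
    using alpha eps_nonneg by (intro mult_right_mono) auto
  moreover have "1 - alpha - eps \<le> (1 - eps) * (1 - alpha)"
    using False eps_nonneg by (simp add: algebra_simps)
  ultimately have d_le: "d \<le> 1 - alpha"
    using M_pos by (simp add: d_def divide_le_eq mult.commute)
  obtain n :: nat where "real n \<le> 1 / d" and enough: "alpha < real n * d"
    using enough_greedy_steps[OF d_pos d_le] by blast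
  hence n_bound: "real n \<le> M / (1 - alpha - eps)" by (simp add: d_def)
  from enough obtain S where "finite S" "card S \<le> n" "alpha < measure mu (\<Union>z\<in>S. Y z)"
    using greedy_cover[of Y mu alpha d n] step mu_sets Y_borel by auto
  then show ?thesis using n_bound by (intro exI[of _ S]) auto
qed

end
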